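(* Let $\Omega\subset\mathbb{R}^N$ be a bounded region with $\partial\Omega\in\mathrm{Lip}(\gamma,M,\delta,s,\{V_j\}_{j=1}^s,\{\lambda_j\}_{j=1}^s)$, and let $T_\varepsilon$, $0<\varepsilon\le\delta/4$, be the maps defined in the context. Then there exist $A_5,\varepsilon_4>0$, depending only on $N,\gamma,M,\delta,s,\{V_j\}_{j=1}^s,\{\lambda_j\}_{j=1}^s$, such that for all $0<\varepsilon\le\varepsilon_4$ $$|\Omega\setminus T_\varepsilon(\Omega)|\le A_5\varepsilon.$$
   Context: A region is an open connected subset of $\mathbb{R}^N$; $|\cdot|$ is Lebesgue measure. For an open set $V$ let $(V)_\delta=\{x\in V:\operatorname{dist}(x,\partial V)>\delta\}$. Hölder class: let $0<\gamma\le1$, $M,\delta>0$, $s\ge1$ an integer, $\{V_j\}_{j=1}^s$ bounded open cuboids and $\{\lambda_j\}_{j=1}^s$ rotations of $\mathbb{R}^N$. A bounded region $\Omega$ satisfies $\partial\Omega\in\mathrm{Lip}(\gamma,M,\delta,s,\{V_j\},\{\lambda_j\})$ if: (i) $\Omega\subset\bigcup_j(V_j)_\delta$ and $(V_j)_\delta\cap\Omega\ne\emptyset$ for each $j$; (ii) for each $j$, $\lambda_j(V_j)=\{x:a_{ij}<x_i<b_{ij},\ i=1,\dots,N\}$ and $\lambda_j(\Omega\cap V_j)=\{x:a_{Nj}<x_N<\varphi_j(\bar x),\ \bar x\in W_j\}$, where $\bar x=(x_1,\dots,x_{N-1})$, $W_j=\{\bar x:a_{ij}<x_i<b_{ij},\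 i=1,\dots,N-1\}$, and $|\varphi_j(\bar x)-\varphi_j(\bar y)|\le M|\bar x-\bar y|^\gamma$ for $\bar x,\bar y\in\overline{W_j}$; (iii) if $V_j\cap\partial\Omega\ne\emptyset$ then $a_{Nj}+\delta\le\varphi_j(\bar x)\le b_{Nj}-\delta$ for $\bar x\in W_j$, while if $V_j\subset\Omega$ then $\varphi_j\equiv b_{Nj}$. The maps $T_\varepsilon$: fix functions $\psi_j\in C^\infty(\mathbb{R}^N)$, $j=1,\dots,s$, with $0\le\psi_j\le1$, $\operatorname{supp}\psi_j\subset(V_j)_{3\delta/4}$, $|\nabla\psi_j|\le b/\delta$ for a fixed constant $b>0$, and $\sum_{j=1}^s\psi_j(x)=1$ for $x\in\Omega$. Let $e_N=(0,\dots,0,1)$ and $\xi_j=\lambda_j^{-1}(e_N)$. For $x\in\mathbb{R}^N$ and $\varepsilon\in(0,\delta/4]$ set $T_\varepsilon(x)=x-\varepsilon\sum_{j=1}^s\xi_j\psi_j(x)$. *)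

theory Defs
  imports "HOL-Analysis.Analysis"
begin

text \<open>Euclidean space R^N is modelled as (real, 'n::{finite,linorder}) vec with a linearly ordered finite index
type 'n; the distinguished N-th (last) coordinate is the greatest index.\<close>

definition lastc :: "'n::{finite,linorder}" where
  "lastc = Max UNIV"

definition eN :: "(real, 'n::{finite,linorder}) vec" where
  "eN = axis lastc 1"

text \<open>x-bar, represented as the vector with last coordinate set to 0
  (isometric copy of R^(N-1)).\<close>
definition proj_bar :: "(real, 'n::{finite,linorder}) vec \<Rightarrow> (real, 'n::{finite,linorder}) vec" where
  "proj_bar x = (\<chi> i. if i = lastc then 0 else x $ i)"

definition Wbox :: "(real, 'n::{finite,linorder}) vec \<Rightarrow> (real, 'n::{finite,linorder}) vec \<Rightarrow> ((real, 'n::{finite,linorder}) vec) set" where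
  "Wbox a b = {x. x $ lastc = 0 \<and> (\<forall>i. i \<noteq> lastc \<longrightarrow> a $ i < x $ i \<and> x $ i < b $ i)}"

definition inner_part :: "('a::metric_space) set \<Rightarrow> real \<Rightarrow> 'a set" where
  "inner_part V d = {x \<in> V. infdist x (frontier V) > d}"

definition rotation :: "((real, 'n::{finite,linorder}) vec \<Rightarrow> (real, 'n::{finite,linorder}) vec) \<Rightarrow> bool" where
  "rotation f \<longleftrightarrow> orthogonal_transformation f \<and> det (matrix f) = 1"

text \<open>C^infinity: all iterated partial derivatives exist, and every one of them
  is (Frechet) differentiable everywhere.\<close>
definition smooth_fun :: "((real, 'n::{finite,linorder}) vec \<Rightarrow> real) \<Rightarrow> bool" where
  "smooth_fun f \<longleftrightarrow> (\<exists>P :: 'n list \<Rightarrow> (real, 'n::{finite,linorder}) vec \<Rightarrow> real. P [] = f \<and>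
     (\<forall>is x. (P is has_derivative (\<lambda>h. \<Sum>i\<in>UNIV. h $ i * P (i # is) x)) (at x)))"

definition lip_boundary ::
  "real \<Rightarrow> real \<Rightarrow> real \<Rightarrow> nat \<Rightarrow> (nat \<Rightarrow> ((real, 'n::{finite,linorder}) vec) set)
   \<Rightarrow> (nat \<Rightarrow> (real, 'n::{finite,linorder}) vec \<Rightarrow> (real, 'n::{finite,linorder}) vec) \<Rightarrow> ((real, 'n::{finite,linorder}) vec) set \<Rightarrow> bool" where
  "lip_boundary \<gamma> M \<delta> s V lam \<Omega> \<longleftrightarrow>
     \<Omega> \<subseteq> (\<Union>j\<in>{1..s}. inner_part (V j) \<delta>) \<and>
     (\<forall>j\<in>{1..s}. inner_part (V j) \<delta> \<inter> \<Omega> \<noteq> {}) \<and>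
     (\<forall>j\<in>{1..s}. \<exists>a b (\<phi> :: (real, 'n::{finite,linorder}) vec \<Rightarrow> real).
        lam j ` V j = box a b \<and>
        lam j ` (\<Omega> \<inter> V j) =
          {x. proj_bar x \<in> Wbox a b \<and> a $ lastc < x $ lastc \<and> x $ lastc < \<phi> (proj_bar x)} \<and>
        (\<forall>x\<in>closure (Wbox a b). \<forall>y\<in>closure (Wbox a b).
            \<bar>\<phi> x - \<phi> y\<bar> \<le> M * norm (x - y) powr \<gamma>) \<and>
        (V j \<inter> frontier \<Omega> \<noteq> {} \<longrightarrow>
            (\<forall>x\<in>Wbox a b. a $ lastc + \<delta> \<le> \<phi> x \<and> \<phi> x \<le> b $ lastc - \<delta>)) \<and>
        (V j \<subseteq> \<Omega> \<longrightarrow> (\<forall>x\<in>Wbox a b. \<phi> x = b $ lastc)))"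

definition T_map :: "nat \<Rightarrow> (nat \<Rightarrow> (real, 'n::{finite,linorder}) vec \<Rightarrow> (real, 'n::{finite,linorder}) vec)
    \<Rightarrow> (nat \<Rightarrow> (real, 'n::{finite,linorder}) vec \<Rightarrow> real) \<Rightarrow> real \<Rightarrow> (real, 'n::{finite,linorder}) vec \<Rightarrow> (real, 'n::{finite,linorder}) vec" where
  "T_map s lam \<psi> \<epsilon> x = x - \<epsilon> *\<^sub>R (\<Sum>j\<in>{1..s}. \<psi> j x *\<^sub>R inv (lam j) eN)"

end

theory Submission
  imports Defs
begin

text \<open>Write \<open>T\<^sub>\<epsilon> x = x - \<epsilon> v x\<close> with \<open>v = (\<Sum>j. \<psi>\<^sub>j \<xi>\<^sub>j)\<close>. For small \<open>\<epsilon>\<close> the map \<open>x \<mapsto> \<epsilon> v x\<close> is a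
  contraction, so every \<open>y\<close> has a preimage \<open>x\<close>, and \<open>x \<notin> \<Omega>\<close> when \<open>y \<in> \<Omega> - T\<^sub>\<epsilon> ` \<Omega>\<close>.
  Inside the chart \<open>V\<^sub>j\<close> the complement of \<open>\<Omega>\<close> is invariant under moving up along \<open>\<xi>\<^sub>j\<close>; pushing
  \<open>x\<close> by \<open>\<epsilon> (1 - \<psi>\<^sub>i x)\<close> along each active direction \<open>\<xi>\<^sub>i\<close>, \<open>i \<in> I = {i. \<psi>\<^sub>i x \<noteq> 0}\<close>, therefore
  stays outside \<open>\<Omega>\<close>, and the point reached is \<open>y + \<epsilon> w\<^sub>I\<close> with \<open>w\<^sub>I = (\<Sum>i\<in>I. \<xi>\<^sub>i)\<close>. So \<open>y\<close> lies in
  the set of points of \<open>\<Omega> \<inter> E\<^sub>I\<close> whose translate by \<open>\<epsilon> w\<^sub>I\<close> leaves \<open>\<Omega>\<close>, where \<open>E\<^sub>I\<close> is the common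
  erosion of the charts in \<open>I\<close>. The same invariance moves this set, translated back by \<open>\<epsilon> w\<^sub>I\<close>,
  into the part of the translate \<open>E\<^sub>I - \<epsilon> w\<^sub>I\<close> outside \<open>E\<^sub>I\<close>, whose measure is \<open>O(\<epsilon>)\<close> because \<open>E\<^sub>I\<close> is bounded, open and
  convex: a homothetic copy of ratio \<open>1 - O(\<epsilon>)\<close> fits into every small translate. Summing over
  the finitely many \<open>I\<close> gives the bound.\<close>

section \<open>Charts\<close>

text \<open>Condition (ii) of the Hoelder class, seen along \<open>\<xi> = \<lambda>\<^sup>-\<^sup>1 e\<^sub>N\<close>: within \<open>V\<close>, \<open>\<Omega>\<close> lies below a graph.\<close>

definition subgraph_along :: "'a::real_vector set \<Rightarrow> 'a set \<Rightarrow> 'a \<Rightarrow> bool" where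
  "subgraph_along V \<Omega> \<xi> \<longleftrightarrow>
     (\<forall>p t. p \<in> V - \<Omega> \<longrightarrow> 0 \<le> t \<longrightarrow> p + t *\<^sub>R \<xi> \<in> V \<longrightarrow> p + t *\<^sub>R \<xi> \<notin> \<Omega>)"

lemma norm_sum_scaleR_unit_le:
  fixes \<xi> :: "'i \<Rightarrow> 'a::real_normed_vector"
  assumes "\<And>i. i \<in> I \<Longrightarrow> norm (\<xi> i) = 1"
  shows "norm (\<Sum>i\<in>I. c i *\<^sub>R \<xi> i) \<le> (\<Sum>i\<in>I. \<bar>c i\<bar>)"
  using norm_sum[of "\<lambda>i. c i *\<^sub>R \<xi> i" I] assms by (simp cong: sum.cong)

lemma subgraph_along_sum_notin:
  fixes \<xi> :: "'i \<Rightarrow> 'a::real_normed_vector"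
  assumes "finite I"
    and "\<And>i. i \<in> I \<Longrightarrow> subgraph_along (V i) \<Omega> (\<xi> i)"
    and "\<And>i. i \<in> I \<Longrightarrow> norm (\<xi> i) = 1"
    and "\<And>i. i \<in> I \<Longrightarrow> ball z r \<subseteq> V i"
    and "\<And>i. i \<in> I \<Longrightarrow> 0 \<le> c i"
    and "sum c I < r" and "z \<notin> \<Omega>"
  shows "z + (\<Sum>i\<in>I. c i *\<^sub>R \<xi> i) \<notin> \<Omega>"
  using assms
proof (induction I rule: finite_induct)
  case empty
  then show ?case by simp
next
  case (insert k F)
  let ?p = "z + (\<Sum>i\<in>F. c i *\<^sub>R \<xi> i)"
  have in_V: "z + (\<Sum>i\<in>I. c i *\<^sub>R \<xi> i) \<in> V k" if "I \<subseteq> insert k F" for I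
  proof -
    have "norm (\<Sum>i\<in>I. c i *\<^sub>R \<xi> i) \<le> (\<Sum>i\<in>I. \<bar>c i\<bar>)"
      using that insert.prems(2) by (intro norm_sum_scaleR_unit_le) auto
    also have "\<dots> = sum c I"
      using that insert.prems(4) by (intro sum.cong) auto
    also have "\<dots> \<le> sum c (insert k F)"
      using that insert by (intro sum_mono2) auto
    finally have "z + (\<Sum>i\<in>I. c i *\<^sub>R \<xi> i) \<in> ball z r"
      using insert.prems(5) by (simp add: dist_norm)
    then show ?thesis
      using insert.prems(3)[of k] by blast
  qed
  have "0 \<le> c k"
    using insert.prems(4) by simp
  then have "sum c F < r"
    using insert.prems(5) insert.hyps by simp
  then have "?p \<notin> \<Omega>"
    using insert.prems by (intro insert.IH) auto
  moreover have "?p \<in> V k"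
    using in_V[of F] by blast
  moreover have "?p + c k *\<^sub>R \<xi> k \<in> V k"
    using in_V[of "insert k F"] insert.hyps by (simp add: algebra_simps)
  ultimately have "?p + c k *\<^sub>R \<xi> k \<notin> \<Omega>"
    using insert.prems(1)[of k] insert.prems(4)[of k] unfolding subgraph_along_def by auto
  then show ?case
    using insert by (simp add: add.commute add.left_commute)
qed

lemma norm_rotation_inv_eN:
  assumes "rotation lam"
  shows "norm (inv lam eN) = 1"
proof -
  have "orthogonal_transformation lam"
    using assms by (simp add: rotation_def)
  then have "norm (inv lam eN) = norm (lam (inv lam eN))"
    by (simp add: orthogonal_transformation_norm)
  also have "lam (inv lam eN) = eN"
    using \<open>orthogonal_transformation lam\<close>
    by (simp add: orthogonal_transformation_surj surj_f_inv_f)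
  finally show ?thesis
    by (simp add: eN_def)
qed

lemma rotation_chart_bounded_convex:
  assumes "rotation lam" and "lam ` V = box a b"
  shows "bounded V" "convex V"
proof -
  have lam: "orthogonal_transformation lam"
    using assms(1) by (simp add: rotation_def)
  have "V = inv lam ` (lam ` V)"
    using orthogonal_transformation_inj[OF lam] by (simp add: image_inv_f_f)
  then have "V = inv lam ` box a b"
    by (simp add: assms(2))
  moreover have "linear (inv lam)"
    using orthogonal_transformation_inv[OF lam] orthogonal_transformation_linear by blast
  ultimately show "bounded V" "convex V"
    by (simp_all add: bounded_linear_image linear_conv_bounded_linear convex_linear_image)
qed

lemma subgraph_along_chart:
  assumes "rotation lam" and "lam ` V = box a b"
    and "lam ` (\<Omega> \<inter> V) =
      {x. proj_bar x \<in> Wbox a b \<and> a $ lastc < x $ lastc \<and> x $ lastc < \<phi> (proj_bar x)}"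
  shows "subgraph_along V \<Omega> (inv lam eN)"
  unfolding subgraph_along_def
proof (intro allI impI notI)
  fix p t assume p: "p \<in> V - \<Omega>" "0 \<le> t" and q: "p + t *\<^sub>R inv lam eN \<in> V" "p + t *\<^sub>R inv lam eN \<in> \<Omega>"
  have lam: "orthogonal_transformation lam"
    using assms(1) by (simp add: rotation_def)
  have "lam (p + t *\<^sub>R inv lam eN) = lam p + t *\<^sub>R eN"
    using orthogonal_transformation_linear[OF lam] orthogonal_transformation_surj[OF lam]
    by (simp add: linear_add linear_scale surj_f_inv_f)
  moreover have "lam (p + t *\<^sub>R inv lam eN) \<in> lam ` (\<Omega> \<inter> V)"
    using q by blast
  moreover have "proj_bar (lam p + t *\<^sub>R eN) = proj_bar (lam p)"
    "(lam p + t *\<^sub>R eN) $ lastc = lam p $ lastc + t"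
    by (simp_all add: proj_bar_def vec_eq_iff eN_def axis_def)
  ultimately have "proj_bar (lam p) \<in> Wbox a b" "lam p $ lastc + t < \<phi> (proj_bar (lam p))"
    unfolding assms(3) by auto
  moreover have "lam p \<in> box a b"
    using p(1) assms(2) by blast
  then have "a $ lastc < lam p $ lastc"
    by (simp add: mem_box_cart)
  ultimately have "lam p \<in> lam ` (\<Omega> \<inter> V)"
    unfolding assms(3) using p(2) by auto
  then have "p \<in> \<Omega>"
    using inj_image_mem_iff[OF orthogonal_transformation_inj[OF lam]] by blast
  with p(1) show False
    by blast
qed

section \<open>Erosions\<close>

definition erosion :: "'a::metric_space set \<Rightarrow> real \<Rightarrow> 'a set" where
  "erosion V d = {y. \<exists>r>d. ball y r \<subseteq> V}"

lemma mem_erosionI: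
  assumes "ball x R \<subseteq> V" and "dist x y + d < R"
  shows "y \<in> erosion V d"
proof -
  have "ball y (R - dist x y) \<subseteq> ball x R"
  proof
    fix z assume "z \<in> ball y (R - dist x y)"
    with dist_triangle[of x z y] show "z \<in> ball x R"
      by simp
  qed
  then show ?thesis
    using assms unfolding erosion_def by (intro CollectI exI[of _ "R - dist x y"]) auto
qed

lemma ball_subset_erosion: "y \<in> erosion V d \<Longrightarrow> ball y d \<subseteq> V"
  unfolding erosion_def by (auto intro: order.trans[rotated])

lemma erosion_subset: "0 \<le> d \<Longrightarrow> erosion V d \<subseteq> V"
  unfolding erosion_def by (auto intro: centre_in_ball[THEN iffD2] dest: le_less_trans)

lemma open_erosion: "open (erosion V d)"
proof (rule openI)
  fix y assume "y \<in> erosion V d"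
  then obtain r where r: "d < r" "ball y r \<subseteq> V"
    unfolding erosion_def by blast
  have "ball y (r - d) \<subseteq> erosion V d"
    using r by (auto intro: mem_erosionI)
  then show "\<exists>e>0. ball y e \<subseteq> erosion V d"
    using r by (intro exI[of _ "r - d"]) auto
qed

lemma convex_erosion:
  fixes V :: "'a::real_normed_vector set"
  assumes "convex V"
  shows "convex (erosion V d)"
proof (rule convexI)
  fix x y :: 'a and u v :: real
  assume "x \<in> erosion V d" "y \<in> erosion V d" and uv: "0 \<le> u" "0 \<le> v" "u + v = 1"
  then obtain r1 r2 where r: "d < r1" "ball x r1 \<subseteq> V" "d < r2" "ball y r2 \<subseteq> V"
    unfolding erosion_def by blast
  have shifted: "u *\<^sub>R x + v *\<^sub>R y + q \<in> V" if "norm q < min r1 r2" for q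
  proof -
    have "x + q \<in> ball x r1" "y + q \<in> ball y r2"
      using that by (auto simp: dist_norm)
    then have "x + q \<in> V" "y + q \<in> V"
      using r by blast+
    then have "u *\<^sub>R (x + q) + v *\<^sub>R (y + q) \<in> V"
      using assms uv by (intro convexD) auto
    moreover have "u *\<^sub>R (x + q) + v *\<^sub>R (y + q) = u *\<^sub>R x + v *\<^sub>R y + (u + v) *\<^sub>R q"
      by (simp add: algebra_simps)
    ultimately show ?thesis
      using uv by simp
  qed
  have "ball (u *\<^sub>R x + v *\<^sub>R y) (min r1 r2) \<subseteq> V"
  proof
    fix p assume "p \<in> ball (u *\<^sub>R x + v *\<^sub>R y) (min r1 r2)"
    then have "u *\<^sub>R x + v *\<^sub>R y + (p - (u *\<^sub>R x + v *\<^sub>R y)) \<in> V"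
      by (intro shifted) (simp add: dist_norm norm_minus_commute)
    then show "p \<in> V"
      by simp
  qed
  then show "u *\<^sub>R x + v *\<^sub>R y \<in> erosion V d"
    using r unfolding erosion_def by (intro CollectI exI[of _ "min r1 r2"]) auto
qed

lemma ball_subset_of_infdist_frontier:
  fixes V :: "'a::real_normed_vector set"
  assumes "x \<in> V" and "r < infdist x (frontier V)"
  shows "ball x r \<subseteq> V"
proof (rule ccontr)
  assume "\<not> ball x r \<subseteq> V"
  then obtain p where p: "p \<in> ball x r" "p \<notin> V"
    by blast
  moreover have "x \<in> ball x r"
    using p(1) zero_le_dist[of x p] by (simp del: zero_le_dist)
  ultimately have "ball x r - V \<noteq> {}" "ball x r \<inter> V \<noteq> {}"
    using assms(1) by blast+
  then obtain f where "f \<in> ball x r" "f \<in> frontier V"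
    using connected_Int_frontier[OF connected_ball] by blast
  then have "infdist x (frontier V) < r"
    using infdist_le[of f "frontier V" x] by simp
  with assms(2) show False
    by simp
qed

lemma ball_subset_of_support:
  fixes f :: "'a::real_normed_vector \<Rightarrow> real"
  assumes "closure {x. f x \<noteq> 0} \<subseteq> inner_part V d" and "f x \<noteq> 0"
  shows "ball x d \<subseteq> V"
proof -
  have "x \<in> closure {x. f x \<noteq> 0}"
    using assms(2) closure_subset[of "{x. f x \<noteq> 0}"] by blast
  then have "x \<in> inner_part V d"
    using assms(1) by (rule subsetD[rotated])
  then have "x \<in> V" "d < infdist x (frontier V)"
    by (simp_all add: inner_part_def)
  then show ?thesis
    by (rule ball_subset_of_infdist_frontier)
qed

section \<open>Translation defect of convex sets\<close>

lemma measure_translation_diff_swap: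
  fixes S :: "'a::euclidean_space set"
  assumes "S \<in> lmeasurable"
  shows "measure lebesgue (S - (+) a ` S) = measure lebesgue ((+) a ` S - S)"
proof -
  have aS: "(+) a ` S \<in> lmeasurable"
    using assms by (rule measurable_translation)
  have I: "S \<inter> (+) a ` S \<in> sets lebesgue"
    using assms aS by blast
  have "S - (+) a ` S = S - (S \<inter> (+) a ` S)" "(+) a ` S - S = (+) a ` S - (S \<inter> (+) a ` S)"
    by blast+
  then show ?thesis
    using measure_Diff[OF _ _ I, of S] measure_Diff[OF _ _ I, of "(+) a ` S"] assms aS
    by (auto simp: measure_translation fmeasurable_def)
qed

lemma homothety_subset_translation:
  fixes N :: "'a::real_normed_vector set"
  assumes "convex N" and "ball c r \<subseteq> N" and "0 < r" and "0 \<le> l" and "norm h < (1 - l) * r"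
  shows "(\<lambda>x. l *\<^sub>R x + (1 - l) *\<^sub>R c) ` N \<subseteq> (+) h ` N"
proof
  fix y assume "y \<in> (\<lambda>x. l *\<^sub>R x + (1 - l) *\<^sub>R c) ` N"
  then obtain n where n: "n \<in> N" "y = l *\<^sub>R n + (1 - l) *\<^sub>R c"
    by blast
  have "0 < (1 - l) * r"
    using assms(5) norm_ge_zero[of h] by linarith
  then have l: "l < 1"
    using assms(3) by (simp add: zero_less_mult_iff)
  define c' where "c' = c - (1 / (1 - l)) *\<^sub>R h"
  have "norm ((1 / (1 - l)) *\<^sub>R h) < r"
    using assms(5) l by (simp add: field_simps)
  then have "c' \<in> N"
    using assms(2) by (auto simp: c'_def dist_norm)
  then have "l *\<^sub>R n + (1 - l) *\<^sub>R c' \<in> N"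
    using assms(1,4) n(1) l by (intro convexD) auto
  moreover have "y = h + (l *\<^sub>R n + (1 - l) *\<^sub>R c')"
    using l by (simp add: n(2) c'_def algebra_simps)
  ultimately show "y \<in> (+) h ` N"
    by blast
qed

lemma measure_translation_diff_convex_small:
  fixes N :: "'a::euclidean_space set"
  assumes "bounded N" "convex N" "open N"
    and "ball c r \<subseteq> N" "0 < r" "h \<noteq> 0" "2 * norm h < r"
  shows "measure lebesgue ((+) h ` N - N) \<le> 2 * DIM('a) * measure lebesgue N / r * norm h"
proof -
  define l where "l = 1 - 2 * norm h / r"
  define H where "H = (\<lambda>x. (1 - l) *\<^sub>R c + l *\<^sub>R x) ` N"
  have l: "0 < l" "l \<le> 1"
    using assms(5,7) by (auto simp: l_def field_simps)
  have H_eq: "H = (\<lambda>x. l *\<^sub>R x + (1 - l) *\<^sub>R c) ` N"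
    unfolding H_def by (simp add: add.commute)
  have "c \<in> N"
    using assms(4,5) by auto
  have N: "N \<in> lmeasurable" and hN: "(+) h ` N \<in> lmeasurable"
    using assms(1,3) by (auto intro: lmeasurable_open measurable_translation)
  have "bounded H"
    using bounded_translation[OF bounded_scaling[OF assms(1)]] by (simp add: H_def image_image)
  moreover have "open H"
    unfolding H_def using assms(3) l by (intro open_affinity) auto
  ultimately have H: "H \<in> lmeasurable"
    by (rule lmeasurable_open)
  have "H \<subseteq> (+) h ` N"
    unfolding H_eq using assms(2,4,5,6) l
    by (intro homothety_subset_translation) (auto simp: l_def)
  moreover have "(+) h ` N - N \<subseteq> (+) h ` N - H"
    unfolding H_eq using assms(2) \<open>c \<in> N\<close> l by (auto intro!: convexD)
  ultimately have "measure lebesgue ((+) h ` N - N) \<le> measure lebesgue ((+) h ` N - H)"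
    using hN H N by (intro measure_mono_fmeasurable fmeasurable_Diff) auto
  also have "\<dots> = measure lebesgue ((+) h ` N) - measure lebesgue H"
    using hN H \<open>H \<subseteq> (+) h ` N\<close> by (intro measurable_measure_Diff) auto
  also have "\<dots> = measure lebesgue N - l ^ DIM('a) * measure lebesgue N"
    unfolding H_eq using measure_lebesgue_affine[of l "(1 - l) *\<^sub>R c" N] l
    by (simp add: measure_translation)
  also have "\<dots> \<le> measure lebesgue N * (DIM('a) * (1 - l))"
  proof -
    have "1 - l ^ DIM('a) \<le> DIM('a) * (1 - l)"
      using Bernoulli_inequality[of "l - 1" "DIM('a)"] l by (simp add: algebra_simps)
    from mult_left_mono[OF this, of "measure lebesgue N"] show ?thesis
      by (simp add: algebra_simps)
  qed
  also have "\<dots> = 2 * DIM('a) * measure lebesgue N / r * norm h"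
    using assms(5) by (simp add: l_def field_simps)
  finally show ?thesis .
qed

lemma measure_translation_diff_le:
  fixes N :: "'a::euclidean_space set"
  assumes "N \<in> lmeasurable"
  shows "measure lebesgue ((+) h ` N - N) \<le> measure lebesgue N"
proof -
  have "measure lebesgue ((+) h ` N - N) \<le> measure lebesgue ((+) h ` N)"
    using assms measurable_translation by (intro measure_mono_fmeasurable) auto
  then show ?thesis
    by (simp only: measure_translation)
qed

lemma convex_translation_defect_linear:
  fixes N :: "'a::euclidean_space set"
  assumes "bounded N" "convex N" "open N"
  shows "\<exists>C\<ge>0. \<forall>h. measure lebesgue ((+) h ` N - N) \<le> C * norm h"
proof (cases "N = {}")
  case True
  then show ?thesis
    by auto
next
  case False
  then obtain c r where r: "0 < r" "ball c r \<subseteq> N"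
    using assms(3) open_contains_ball by blast
  define C where "C = 2 * DIM('a) * measure lebesgue N / r"
  have "measure lebesgue ((+) h ` N - N) \<le> C * norm h" for h
  proof -
    consider "h = 0" | "h \<noteq> 0" "2 * norm h < r" | "r \<le> 2 * norm h"
      by fastforce
    then show ?thesis
    proof cases
      case 1
      then show ?thesis
        by (simp add: C_def)
    next
      case 2
      then show ?thesis
        unfolding C_def using assms r by (intro measure_translation_diff_convex_small)
    next
      case 3
      have "measure lebesgue N * r \<le> measure lebesgue N * (2 * norm h)"
        using 3 by (intro mult_left_mono) auto
      then have "measure lebesgue N \<le> 2 * measure lebesgue N / r * norm h"
        using r(1) by (simp add: field_simps)
      also have "\<dots> \<le> C * norm h"
        unfolding C_def using r(1) DIM_positive[where 'a = 'a]
        by (intro mult_right_mono divide_right_mono) (auto simp: Suc_le_eq)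
      finally show ?thesis
        using measure_translation_diff_le[OF lmeasurable_open[OF assms(1,3)], of h] by linarith
    qed
  qed
  moreover have "0 \<le> C"
    using r(1) by (simp add: C_def)
  ultimately show ?thesis
    by blast
qed

text \<open>Arbitrary when no such \<open>C\<close> exists.\<close>

definition translation_modulus :: "'a::euclidean_space set \<Rightarrow> real" where
  "translation_modulus N =
     (SOME C. 0 \<le> C \<and> (\<forall>h. measure lebesgue ((+) h ` N - N) \<le> C * norm h))"

lemma translation_modulus:
  fixes N :: "'a::euclidean_space set"
  assumes "bounded N" "convex N" "open N"
  shows "0 \<le> translation_modulus N"
    and "measure lebesgue ((+) h ` N - N) \<le> translation_modulus N * norm h"
proof -
  have "0 \<le> translation_modulus N \<and>
      (\<forall>h. measure lebesgue ((+) h ` N - N) \<le> translation_modulus N * norm h)"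
    using convex_translation_defect_linear[OF assms] unfolding translation_modulus_def
    by (rule someI_ex)
  then show "0 \<le> translation_modulus N"
    and "measure lebesgue ((+) h ` N - N) \<le> translation_modulus N * norm h"
    by blast+
qed

lemma escaping_set_lebesgue:
  fixes \<Omega> S :: "'a::euclidean_space set"
  assumes "open \<Omega>" "open S"
  shows "{y \<in> S. y + h \<notin> \<Omega>} \<in> sets lebesgue"
proof -
  have "{y \<in> S. y + h \<notin> \<Omega>} = S - (+) (- h) ` \<Omega>"
    by force
  moreover have "open ((+) (- h) ` \<Omega>)"
    using assms(1) by (rule open_translation)
  ultimately show ?thesis
    using assms(2) by (simp add: borel_open sets.Diff)
qed

lemma measure_escaping_le:
  fixes \<Omega> N :: "'a::euclidean_space set"
  assumes "open \<Omega>" "open N" "bounded N"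
    and escape: "\<And>z. z \<in> N - \<Omega> \<Longrightarrow> z + h \<notin> \<Omega>"
  shows "measure lebesgue {y \<in> \<Omega> \<inter> N. y + h \<notin> \<Omega>} \<le> measure lebesgue ((+) (- h) ` N - N)"
proof -
  define D where "D = \<Omega> \<inter> N"
  have D: "D \<in> lmeasurable"
    unfolding D_def using assms(1-3) by (intro lmeasurable_open) auto
  have N: "N \<in> lmeasurable"
    using assms(2,3) by (intro lmeasurable_open)
  have "measure lebesgue {y \<in> D. y + h \<notin> \<Omega>} \<le> measure lebesgue (D - (+) (- h) ` D)"
  proof (rule measure_mono_fmeasurable)
    show "{y \<in> D. y + h \<notin> \<Omega>} \<subseteq> D - (+) (- h) ` D"
      by (force simp: D_def)
    show "{y \<in> D. y + h \<notin> \<Omega>} \<in> sets lebesgue"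
      unfolding D_def using assms(1,2) by (intro escaping_set_lebesgue) auto
    show "D - (+) (- h) ` D \<in> lmeasurable"
      using D measurable_translation[OF D, of "- h"] by auto
  qed
  also have "\<dots> = measure lebesgue ((+) (- h) ` D - D)"
    using D by (rule measure_translation_diff_swap)
  also have "\<dots> \<le> measure lebesgue ((+) (- h) ` N - N)"
  proof (rule measure_mono_fmeasurable)
    show "(+) (- h) ` D - D \<subseteq> (+) (- h) ` N - N"
      using escape by (force simp: D_def)
    show "(+) (- h) ` D - D \<in> sets lebesgue"
      using D measurable_translation[OF D, of "- h"] by auto
    show "(+) (- h) ` N - N \<in> lmeasurable"
      using N measurable_translation[OF N, of "- h"] by auto
  qed
  finally show ?thesis
    by (simp add: D_def)
qed

section \<open>Perturbations of the identity along chart directions\<close>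

lemma perturbed_identity_surj:
  fixes g :: "'a::banach \<Rightarrow> 'a"
  assumes "0 \<le> k" "k < 1" and "\<And>x z. dist (g x) (g z) \<le> k * dist x z"
  shows "\<exists>x. x - g x = y"
proof -
  have "\<exists>!x. y + g x = x"
    using assms by (intro banach_fix_type) (auto simp: dist_add_cancel)
  then obtain x where "y + g x = x"
    by blast
  then have "x - g x = y"
    by (simp add: algebra_simps)
  then show ?thesis ..
qed

lemma lipschitz_of_derivative_bound:
  fixes f :: "'a::real_normed_vector \<Rightarrow> 'b::real_normed_vector"
  assumes "\<And>x. f differentiable (at x)"
    and "\<And>x D. (f has_derivative D) (at x) \<Longrightarrow> onorm D \<le> B"
  shows "dist (f x) (f y) \<le> B * dist x y"
proof -
  have "\<And>x. (f has_derivative frechet_derivative f (at x)) (at x)"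
    using assms(1) by (rule frechet_derivative_works[THEN iffD1])
  then have "norm (f x - f y) \<le> B * norm (x - y)"
    using assms(2) by (intro differentiable_bound[OF convex_UNIV]) auto
  then show ?thesis
    by (simp add: dist_norm)
qed

lemma smooth_fun_differentiable:
  fixes f :: "(real, 'n::{finite,linorder}) vec \<Rightarrow> real"
  assumes "smooth_fun f"
  shows "f differentiable (at x)"
proof -
  obtain P :: "'n list \<Rightarrow> (real, 'n) vec \<Rightarrow> real" where
    "P [] = f" "\<And>x. (P [] has_derivative (\<lambda>h. \<Sum>i\<in>UNIV. h $ i * P [i] x)) (at x)"
    using assms unfolding smooth_fun_def by blast
  then have "(f has_derivative (\<lambda>h. \<Sum>i\<in>UNIV. h $ i * P [i] x)) (at x)"
    by simp
  then show ?thesis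
    unfolding differentiable_def by blast
qed

locale graph_charts =
  fixes J :: "'i set" and V :: "'i \<Rightarrow> 'a::euclidean_space set" and \<xi> :: "'i \<Rightarrow> 'a"
    and \<Omega> :: "'a set" and \<psi> :: "'i \<Rightarrow> 'a \<Rightarrow> real" and r L :: real
  assumes finite_J: "finite J"
    and open_\<Omega>: "open \<Omega>" and bounded_\<Omega>: "bounded \<Omega>"
    and convex_V: "j \<in> J \<Longrightarrow> convex (V j)" and bounded_V: "j \<in> J \<Longrightarrow> bounded (V j)"
    and norm_\<xi>: "j \<in> J \<Longrightarrow> norm (\<xi> j) = 1"
    and subgraph: "j \<in> J \<Longrightarrow> subgraph_along (V j) \<Omega> (\<xi> j)"
    and \<psi>_nonneg: "j \<in> J \<Longrightarrow> 0 \<le> \<psi> j x" and \<psi>_le_1: "j \<in> J \<Longrightarrow> \<psi> j x \<le> 1"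
    and \<psi>_support: "j \<in> J \<Longrightarrow> \<psi> j x \<noteq> 0 \<Longrightarrow> ball x r \<subseteq> V j"
    and \<psi>_differentiable: "j \<in> J \<Longrightarrow> \<psi> j differentiable (at x)"
    and L_nonneg: "0 \<le> L"
    and \<psi>_lipschitz: "j \<in> J \<Longrightarrow> dist (\<psi> j x) (\<psi> j y) \<le> L * dist x y"
begin

definition drift :: "'a \<Rightarrow> 'a" where
  "drift x = (\<Sum>j\<in>J. \<psi> j x *\<^sub>R \<xi> j)"

lemma norm_drift_le: "norm (drift x) \<le> card J"
proof -
  have "norm (drift x) \<le> (\<Sum>j\<in>J. \<bar>\<psi> j x\<bar>)"
    unfolding drift_def using norm_\<xi> by (rule norm_sum_scaleR_unit_le)
  also have "\<dots> \<le> (\<Sum>j\<in>J. 1)"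
    using \<psi>_nonneg \<psi>_le_1 by (intro sum_mono) (simp add: abs_le_iff)
  finally show ?thesis
    by simp
qed

lemma dist_drift_le: "dist (drift x) (drift y) \<le> card J * L * dist x y"
proof -
  have "dist (drift x) (drift y) = norm (\<Sum>j\<in>J. (\<psi> j x - \<psi> j y) *\<^sub>R \<xi> j)"
    by (simp add: drift_def dist_norm scaleR_diff_left sum_subtractf)
  also have "\<dots> \<le> (\<Sum>j\<in>J. \<bar>\<psi> j x - \<psi> j y\<bar>)"
    using norm_\<xi> by (rule norm_sum_scaleR_unit_le)
  also have "\<dots> \<le> (\<Sum>j\<in>J. L * dist x y)"
    using \<psi>_lipschitz by (intro sum_mono) (simp add: dist_real_def)
  finally show ?thesis
    by simp
qed

lemma drift_differentiable: "drift differentiable (at x)"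
  unfolding drift_def[abs_def] using finite_J \<psi>_differentiable
  by (intro differentiable_sum ballI differentiable_scaleR differentiable_const) auto

definition active_charts :: "'a \<Rightarrow> 'i set" where
  "active_charts x = {j\<in>J. \<psi> j x \<noteq> 0}"

lemma finite_active_charts: "finite (active_charts x)"
  using finite_J by (simp add: active_charts_def)

lemma drift_eq_sum_active: "drift x = (\<Sum>i\<in>active_charts x. \<psi> i x *\<^sub>R \<xi> i)"
  unfolding drift_def active_charts_def using finite_J by (intro sum.mono_neutral_right) auto

lemma dist_drift_step_le:
  fixes \<epsilon> :: real
  assumes "0 \<le> \<epsilon>"
  shows "dist x (x - \<epsilon> *\<^sub>R drift x) \<le> \<epsilon> * card J"
  using assms mult_left_mono[OF norm_drift_le, of \<epsilon> x] by (simp add: dist_norm)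

lemma raised_preimage_notin:
  fixes \<epsilon> :: real
  assumes "0 < \<epsilon>" "\<epsilon> * card J < r" and "x \<notin> \<Omega>"
  shows "x - \<epsilon> *\<^sub>R drift x + \<epsilon> *\<^sub>R (\<Sum>i\<in>active_charts x. \<xi> i) \<notin> \<Omega>"
proof -
  define c where "c i = \<epsilon> * (1 - \<psi> i x)" for i
  have "sum c (active_charts x) \<le> (\<Sum>i\<in>active_charts x. \<epsilon>)"
    using assms(1) \<psi>_nonneg by (intro sum_mono) (auto simp: c_def active_charts_def)
  also have "\<dots> \<le> \<epsilon> * card J"
    using assms(1) card_mono[OF finite_J] by (simp add: active_charts_def)
  finally have "sum c (active_charts x) < r"
    using assms(2) by linarith
  moreover have "0 \<le> c i" "ball x r \<subseteq> V i" if "i \<in> active_charts x" for i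
    using that assms(1) \<psi>_le_1 \<psi>_support by (auto simp: c_def active_charts_def)
  ultimately have "x + (\<Sum>i\<in>active_charts x. c i *\<^sub>R \<xi> i) \<notin> \<Omega>"
    using finite_active_charts subgraph norm_\<xi> assms(3)
    by (intro subgraph_along_sum_notin[where V = V]) (auto simp: active_charts_def)
  moreover have "c i *\<^sub>R \<xi> i = \<epsilon> *\<^sub>R \<xi> i - \<epsilon> *\<^sub>R (\<psi> i x *\<^sub>R \<xi> i)" for i
    by (simp add: c_def algebra_simps)
  then have "(\<Sum>i\<in>active_charts x. c i *\<^sub>R \<xi> i) =
      \<epsilon> *\<^sub>R (\<Sum>i\<in>active_charts x. \<xi> i) - \<epsilon> *\<^sub>R drift x"
    by (simp add: drift_eq_sum_active sum_subtractf scaleR_sum_right)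
  ultimately show ?thesis
    by (simp add: algebra_simps)
qed

lemma escape_from_preimage:
  fixes \<epsilon> :: real
  assumes "0 < \<epsilon>" "\<epsilon> * card J < r / 2"
    and "x \<notin> \<Omega>" and y: "y = x - \<epsilon> *\<^sub>R drift x" "y \<in> \<Omega>"
  obtains I where "I \<subseteq> J" "I \<noteq> {}" "y \<in> (\<Inter>i\<in>I. erosion (V i) (r / 2))"
    "y + \<epsilon> *\<^sub>R (\<Sum>i\<in>I. \<xi> i) \<notin> \<Omega>"
proof (rule that)
  show "active_charts x \<subseteq> J"
    by (auto simp: active_charts_def)
  show "active_charts x \<noteq> {}"
  proof
    assume "active_charts x = {}"
    then have "y = x"
      by (simp add: y(1) drift_eq_sum_active)
    with assms(3) y(2) show False
      by simp
  qed
  have "dist x y + r / 2 < r"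
    using dist_drift_step_le[OF less_imp_le[OF assms(1)], of x] assms(2) unfolding y(1) by linarith
  then show "y \<in> (\<Inter>i\<in>active_charts x. erosion (V i) (r / 2))"
    using \<psi>_support by (auto simp: active_charts_def intro!: mem_erosionI[of x r])
  show "y + \<epsilon> *\<^sub>R (\<Sum>i\<in>active_charts x. \<xi> i) \<notin> \<Omega>"
  proof -
    have "\<epsilon> * card J < r"
      using assms(1,2) zero_le_mult_iff[of \<epsilon> "card J"] by linarith
    then show ?thesis
      using raised_preimage_notin[OF assms(1) _ assms(3)] y(1) by simp
  qed
qed

lemma common_erosion_bounded_convex_open:
  assumes "I \<subseteq> J" "I \<noteq> {}" "0 \<le> d"
  shows "bounded (\<Inter>i\<in>I. erosion (V i) d)" "convex (\<Inter>i\<in>I. erosion (V i) d)"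
    "open (\<Inter>i\<in>I. erosion (V i) d)"
proof -
  obtain i where "i \<in> I"
    using assms(2) by blast
  then have "(\<Inter>i\<in>I. erosion (V i) d) \<subseteq> V i"
    using erosion_subset[OF assms(3)] by blast
  then show "bounded (\<Inter>i\<in>I. erosion (V i) d)"
    using \<open>i \<in> I\<close> assms(1) bounded_V bounded_subset by blast
  show "convex (\<Inter>i\<in>I. erosion (V i) d)"
    using assms(1) convex_V by (auto intro!: convex_INT convex_erosion)
  show "open (\<Inter>i\<in>I. erosion (V i) d)"
    using assms(1) finite_J by (auto intro: open_erosion finite_subset)
qed

lemma norm_sum_\<xi>_le:
  assumes "I \<subseteq> J"
  shows "norm (\<Sum>i\<in>I. \<xi> i) \<le> card J"
proof -
  have "norm (\<Sum>i\<in>I. 1 *\<^sub>R \<xi> i) \<le> (\<Sum>i\<in>I. \<bar>1::real\<bar>)"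
    using assms norm_\<xi> by (intro norm_sum_scaleR_unit_le) auto
  also have "\<dots> \<le> card J"
    using card_mono[OF finite_J assms] by simp
  finally show ?thesis
    by simp
qed

lemma common_erosion_shift_notin:
  fixes \<epsilon> :: real
  assumes "0 \<le> \<epsilon>" "\<epsilon> * card J < d" "I \<subseteq> J" "z \<in> (\<Inter>i\<in>I. erosion (V i) d) - \<Omega>"
  shows "z + \<epsilon> *\<^sub>R (\<Sum>i\<in>I. \<xi> i) \<notin> \<Omega>"
proof -
  have "ball z d \<subseteq> V i" if "i \<in> I" for i
    using assms(4) that ball_subset_erosion by blast
  moreover have "(\<Sum>i\<in>I. \<epsilon>) < d"
    using assms(1-3) card_mono[OF finite_J assms(3)] mult_left_mono[of "card I" "card J" \<epsilon>]
    by (simp add: mult.commute)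
  ultimately have "z + (\<Sum>i\<in>I. \<epsilon> *\<^sub>R \<xi> i) \<notin> \<Omega>"
    using assms(1,3,4) subgraph norm_\<xi> finite_subset[OF assms(3) finite_J]
    by (intro subgraph_along_sum_notin[where V = V and r = d]) auto
  then show ?thesis
    by (simp add: scaleR_sum_right)
qed

lemma measure_escaping_le_modulus:
  fixes \<epsilon> :: real
  assumes "0 < \<epsilon>" "\<epsilon> * card J < r / 2" "I \<subseteq> J" "I \<noteq> {}"
  defines "E \<equiv> \<Inter>i\<in>I. erosion (V i) (r / 2)"
  shows "measure lebesgue {y \<in> \<Omega> \<inter> E. y + \<epsilon> *\<^sub>R (\<Sum>i\<in>I. \<xi> i) \<notin> \<Omega>}
    \<le> \<epsilon> * card J * translation_modulus E"
proof -
  have "0 \<le> r / 2"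
    using assms(1,2) zero_le_mult_iff[of \<epsilon> "card J"] by linarith
  note E = common_erosion_bounded_convex_open[OF assms(3,4) this, folded E_def]
  define h where "h = \<epsilon> *\<^sub>R (\<Sum>i\<in>I. \<xi> i)"
  have escape: "z + h \<notin> \<Omega>" if "z \<in> E - \<Omega>" for z
    unfolding h_def using assms(1-3) that
    by (intro common_erosion_shift_notin[where d = "r / 2"]) (auto simp: E_def)
  have "measure lebesgue {y \<in> \<Omega> \<inter> E. y + h \<notin> \<Omega>} \<le> measure lebesgue ((+) (- h) ` E - E)"
    using open_\<Omega> E(3,1) escape by (rule measure_escaping_le)
  also have "\<dots> \<le> translation_modulus E * norm (- h)"
    using E by (rule translation_modulus(2))
  also have "\<dots> \<le> translation_modulus E * (\<epsilon> * card J)"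
    using translation_modulus(1)[OF E] norm_sum_\<xi>_le[OF assms(3)] assms(1)
    by (intro mult_left_mono) (auto simp: h_def)
  finally show ?thesis
    by (simp add: h_def mult.commute)
qed

lemma drift_step_surj:
  fixes \<epsilon> :: real
  assumes "0 \<le> \<epsilon>" "\<epsilon> * card J * L < 1"
  shows "\<exists>x. x - \<epsilon> *\<^sub>R drift x = y"
proof (rule perturbed_identity_surj)
  show "0 \<le> \<epsilon> * card J * L"
    using assms(1) L_nonneg by simp
  show "dist (\<epsilon> *\<^sub>R drift x) (\<epsilon> *\<^sub>R drift z) \<le> \<epsilon> * card J * L * dist x z" for x z
    using assms(1) mult_left_mono[OF dist_drift_le, of \<epsilon> x z]
    by (simp add: dist_norm flip: scaleR_diff_right mult.assoc)
qed (rule assms(2))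

lemma diff_drift_image_subset:
  fixes \<epsilon> :: real
  assumes "0 < \<epsilon>" "\<epsilon> * card J < r / 2" "\<epsilon> * card J * L < 1"
  shows "\<Omega> - (\<lambda>x. x - \<epsilon> *\<^sub>R drift x) ` \<Omega> \<subseteq>
    (\<Union>I\<in>Pow J - {{}}. {y \<in> \<Omega> \<inter> (\<Inter>i\<in>I. erosion (V i) (r / 2)). y + \<epsilon> *\<^sub>R (\<Sum>i\<in>I. \<xi> i) \<notin> \<Omega>})"
proof
  fix y assume y: "y \<in> \<Omega> - (\<lambda>x. x - \<epsilon> *\<^sub>R drift x) ` \<Omega>"
  obtain x where x: "y = x - \<epsilon> *\<^sub>R drift x"
    using drift_step_surj[of \<epsilon> y] assms(1,3) by auto
  then have "x \<notin> \<Omega>"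
    using y by blast
  then obtain I where "I \<subseteq> J" "I \<noteq> {}" "y \<in> (\<Inter>i\<in>I. erosion (V i) (r / 2))"
    "y + \<epsilon> *\<^sub>R (\<Sum>i\<in>I. \<xi> i) \<notin> \<Omega>"
    using escape_from_preimage[OF assms(1,2) _ x] y by blast
  then show "y \<in> (\<Union>I\<in>Pow J - {{}}.
      {y \<in> \<Omega> \<inter> (\<Inter>i\<in>I. erosion (V i) (r / 2)). y + \<epsilon> *\<^sub>R (\<Sum>i\<in>I. \<xi> i) \<notin> \<Omega>})"
    using y by blast
qed

lemma lmeasurable_diff_drift_image: "\<Omega> - (\<lambda>x. x - \<epsilon> *\<^sub>R drift x) ` \<Omega> \<in> lmeasurable"
proof -
  have \<Omega>: "\<Omega> \<in> lmeasurable"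
    using bounded_\<Omega> open_\<Omega> by (rule lmeasurable_open)
  have "(\<lambda>x. x - \<epsilon> *\<^sub>R drift x) differentiable_on \<Omega>"
    using drift_differentiable
    by (intro differentiable_at_imp_differentiable_on differentiable_diff differentiable_scaleR) auto
  then have "(\<lambda>x. x - \<epsilon> *\<^sub>R drift x) ` \<Omega> \<in> sets lebesgue"
    using \<Omega> by (intro differentiable_image_in_sets_lebesgue) auto
  then show ?thesis
    using \<Omega> by (intro fmeasurableI2[OF \<Omega>]) auto
qed

theorem measure_diff_drift_image_le:
  fixes \<epsilon> :: real
  assumes "0 < \<epsilon>" "\<epsilon> * card J < r / 2" "\<epsilon> * card J * L < 1"
  shows "measure lebesgue (\<Omega> - (\<lambda>x. x - \<epsilon> *\<^sub>R drift x) ` \<Omega>) \<le>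
    \<epsilon> * card J * (\<Sum>I\<in>Pow J - {{}}. translation_modulus (\<Inter>i\<in>I. erosion (V i) (r / 2)))"
proof -
  define B where "B I = {y \<in> \<Omega> \<inter> (\<Inter>i\<in>I. erosion (V i) (r / 2)). y + \<epsilon> *\<^sub>R (\<Sum>i\<in>I. \<xi> i) \<notin> \<Omega>}"
    for I
  have B: "B I \<in> sets lebesgue" if "I \<subseteq> J" for I
  proof -
    have "open (\<Omega> \<inter> (\<Inter>i\<in>I. erosion (V i) (r / 2)))"
      using that finite_J open_\<Omega> by (auto intro: open_erosion finite_subset)
    then show ?thesis
      unfolding B_def using open_\<Omega> by (rule escaping_set_lebesgue[rotated])
  qed
  have "(\<Union>I\<in>Pow J - {{}}. B I) \<in> lmeasurable"
    using B finite_J bounded_\<Omega> open_\<Omega>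
    by (intro fmeasurableI2[OF lmeasurable_open[of \<Omega>]]) (auto simp: B_def)
  then have "measure lebesgue (\<Omega> - (\<lambda>x. x - \<epsilon> *\<^sub>R drift x) ` \<Omega>) \<le> measure lebesgue (\<Union>I\<in>Pow J - {{}}. B I)"
    using diff_drift_image_subset[OF assms] lmeasurable_diff_drift_image
    unfolding B_def by (intro measure_mono_fmeasurable) auto
  also have "\<dots> \<le> (\<Sum>I\<in>Pow J - {{}}. measure lebesgue (B I))"
    using B finite_J by (intro measure_UNION_le) auto
  also have "\<dots> \<le> (\<Sum>I\<in>Pow J - {{}}. \<epsilon> * card J * translation_modulus (\<Inter>i\<in>I. erosion (V i) (r / 2)))"
    unfolding B_def using assms(1,2) by (intro sum_mono measure_escaping_le_modulus) auto
  finally show ?thesis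
    by (simp add: sum_distrib_left)
qed

end

lemma lip_boundary_graph_charts:
  fixes V :: "nat \<Rightarrow> (real, 'n::{finite,linorder}) vec set"
  assumes "\<forall>j\<in>{1..s}. rotation (lam j)" and "0 < \<delta>" "0 < bc"
    and "open \<Omega>" "bounded \<Omega>" "lip_boundary \<gamma> M \<delta> s V lam \<Omega>"
    and \<psi>: "\<forall>j\<in>{1..s}. smooth_fun (\<psi> j) \<and> (\<forall>x. 0 \<le> \<psi> j x \<and> \<psi> j x \<le> 1) \<and>
       closure {x. \<psi> j x \<noteq> 0} \<subseteq> inner_part (V j) (3 * \<delta> / 4) \<and>
       (\<forall>x D. (\<psi> j has_derivative D) (at x) \<longrightarrow> onorm D \<le> bc / \<delta>)"
  shows "graph_charts {1..s} V (\<lambda>j. inv (lam j) eN) \<Omega> \<psi> (3 * \<delta> / 4) (bc / \<delta>)"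
proof
  fix j assume j: "j \<in> {1..s}"
  obtain a b \<phi> where chart: "lam j ` V j = box a b"
    "lam j ` (\<Omega> \<inter> V j) =
       {x. proj_bar x \<in> Wbox a b \<and> a $ lastc < x $ lastc \<and> x $ lastc < \<phi> (proj_bar x)}"
    using assms(6)[unfolded lip_boundary_def, THEN conjunct2, THEN conjunct2, rule_format, OF j]
    by (elim exE conjE) (rule that)
  have rot: "rotation (lam j)"
    using assms(1) j by blast
  have \<psi>j: "smooth_fun (\<psi> j)" "\<And>x. 0 \<le> \<psi> j x \<and> \<psi> j x \<le> 1"
    "closure {x. \<psi> j x \<noteq> 0} \<subseteq> inner_part (V j) (3 * \<delta> / 4)"
    "\<And>x D. (\<psi> j has_derivative D) (at x) \<Longrightarrow> onorm D \<le> bc / \<delta>"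
    using \<psi> j by auto
  show "convex (V j)" "bounded (V j)"
    using rotation_chart_bounded_convex[OF rot chart(1)] by auto
  show "norm (inv (lam j) eN) = 1"
    using rot by (rule norm_rotation_inv_eN)
  show "subgraph_along (V j) \<Omega> (inv (lam j) eN)"
    using rot chart by (rule subgraph_along_chart)
  fix x
  show "0 \<le> \<psi> j x" "\<psi> j x \<le> 1"
    using \<psi>j(2) by auto
  show "\<psi> j differentiable (at x)"
    using \<psi>j(1) by (rule smooth_fun_differentiable)
  show "ball x (3 * \<delta> / 4) \<subseteq> V j" if "\<psi> j x \<noteq> 0"
    using \<psi>j(3) that by (rule ball_subset_of_support)
  fix y
  show "dist (\<psi> j x) (\<psi> j y) \<le> bc / \<delta> * dist x y"
    using smooth_fun_differentiable[OF \<psi>j(1)] \<psi>j(4) by (rule lipschitz_of_derivative_bound)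
qed (use assms(2-5) in simp_all)

lemma measure_diff_T_map_le:
  fixes V :: "nat \<Rightarrow> (real, 'n::{finite,linorder}) vec set"
  assumes "\<forall>j\<in>{1..s}. rotation (lam j)" and "0 < \<delta>" "0 < bc"
    and A: "real s * (\<Sum>I\<in>Pow {1..s} - {{}}.
      translation_modulus (\<Inter>i\<in>I. erosion (V i) (3 * \<delta> / 4 / 2))) \<le> A"
    and \<Omega>: "open \<Omega>" "bounded \<Omega>" "lip_boundary \<gamma> M \<delta> s V lam \<Omega>"
    and \<psi>: "\<forall>j\<in>{1..s}. smooth_fun (\<psi> j) \<and> (\<forall>x. 0 \<le> \<psi> j x \<and> \<psi> j x \<le> 1) \<and>
       closure {x. \<psi> j x \<noteq> 0} \<subseteq> inner_part (V j) (3 * \<delta> / 4) \<and>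
       (\<forall>x D. (\<psi> j has_derivative D) (at x) \<longrightarrow> onorm D \<le> bc / \<delta>)"
    and \<epsilon>: "0 < \<epsilon>" "\<epsilon> \<le> min (\<delta> / (4 * s)) (\<delta> / (2 * s * bc))"
  shows "\<Omega> - T_map s lam \<psi> \<epsilon> ` \<Omega> \<in> sets lebesgue"
    and "emeasure lebesgue (\<Omega> - T_map s lam \<psi> \<epsilon> ` \<Omega>) \<le> ennreal (A * \<epsilon>)"
proof -
  interpret graph_charts "{1..s}" V "\<lambda>j. inv (lam j) eN" \<Omega> \<psi> "3 * \<delta> / 4" "bc / \<delta>"
    using assms(1-3) \<Omega> \<psi> by (rule lip_boundary_graph_charts)
  have T: "T_map s lam \<psi> \<epsilon> = (\<lambda>x. x - \<epsilon> *\<^sub>R drift x)"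
    unfolding T_map_def drift_def by simp
  have "0 < s"
    using \<epsilon> by (cases "s = 0") auto
  then have small: "\<epsilon> * card {1..s} < 3 * \<delta> / 4 / 2" "\<epsilon> * card {1..s} * (bc / \<delta>) < 1"
    using \<epsilon> assms(2,3) by (auto simp: field_simps)
  have "measure lebesgue (\<Omega> - T_map s lam \<psi> \<epsilon> ` \<Omega>) \<le> \<epsilon> * s *
      (\<Sum>I\<in>Pow {1..s} - {{}}. translation_modulus (\<Inter>i\<in>I. erosion (V i) (3 * \<delta> / 4 / 2)))"
    unfolding T using measure_diff_drift_image_le[OF \<epsilon>(1) small] by simp
  also have "\<dots> \<le> A * \<epsilon>"
    using mult_left_mono[OF A, of \<epsilon>] \<epsilon>(1) by (simp add: mult_ac)
  finally show "emeasure lebesgue (\<Omega> - T_map s lam \<psi> \<epsilon> ` \<Omega>) \<le> ennreal (A * \<epsilon>)"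
    using lmeasurable_diff_drift_image by (simp add: T emeasure_eq_measure2 ennreal_leI)
  show "\<Omega> - T_map s lam \<psi> \<epsilon> ` \<Omega> \<in> sets lebesgue"
    using lmeasurable_diff_drift_image by (simp add: T fmeasurableD)
qed

theorem lemma19:
  fixes \<gamma> M \<delta> bc :: real and s :: nat
    and V :: "nat \<Rightarrow> ((real, 'n::{finite,wellorder}) vec) set"
    and lam :: "nat \<Rightarrow> (real, 'n::{finite,wellorder}) vec \<Rightarrow> (real, 'n::{finite,wellorder}) vec"
  assumes "0 < \<gamma>" "\<gamma> \<le> 1" "0 < M" "0 < \<delta>" "1 \<le> s" "0 < bc"
    and "\<forall>j\<in>{1..s}. rotation (lam j)"
  shows "\<exists>A5 \<epsilon>4. A5 > 0 \<and> \<epsilon>4 > 0 \<and> \<epsilon>4 \<le> \<delta> / 4 \<and>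
    (\<forall>\<Omega> \<psi>.
       open \<Omega> \<and> connected \<Omega> \<and> bounded \<Omega> \<and> \<Omega> \<noteq> {} \<and>
       lip_boundary \<gamma> M \<delta> s V lam \<Omega> \<and>
       (\<forall>j\<in>{1..s}. smooth_fun (\<psi> j) \<and> (\<forall>x. 0 \<le> \<psi> j x \<and> \<psi> j x \<le> 1) \<and>
           closure {x. \<psi> j x \<noteq> 0} \<subseteq> inner_part (V j) (3 * \<delta> / 4) \<and>
           (\<forall>x D. (\<psi> j has_derivative D) (at x) \<longrightarrow> onorm D \<le> bc / \<delta>)) \<and>
       (\<forall>x\<in>\<Omega>. (\<Sum>j\<in>{1..s}. \<psi> j x) = 1)
     \<longrightarrow> (\<forall>\<epsilon>. 0 < \<epsilon> \<and> \<epsilon> \<le> \<epsilon>4 \<longrightarrow>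
            \<Omega> - T_map s lam \<psi> \<epsilon> ` \<Omega> \<in> sets lebesgue \<and>
            emeasure lebesgue (\<Omega> - T_map s lam \<psi> \<epsilon> ` \<Omega>) \<le> ennreal (A5 * \<epsilon>)))"
proof -
  let ?C = "\<Sum>I\<in>Pow {1..s} - {{}}. translation_modulus (\<Inter>i\<in>I. erosion (V i) (3 * \<delta> / 4 / 2))"
  let ?\<epsilon>4 = "min (\<delta> / (4 * s)) (\<delta> / (2 * s * bc))"
  have A5: "0 < max 1 (s * ?C)" "s * ?C \<le> max 1 (s * ?C)"
    by simp_all
  have \<epsilon>4: "0 < ?\<epsilon>4" "?\<epsilon>4 \<le> \<delta> / 4"
    using divide_left_mono[of 4 "4 * s" \<delta>] assms(4-6) by (auto simp: min_le_iff_disj)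
  show ?thesis
    by (rule exI[of _ "max 1 (s * ?C)"], rule exI[of _ ?\<epsilon>4], intro conjI allI impI A5(1) \<epsilon>4;
        elim conjE; rule measure_diff_T_map_le[OF assms(7,4,6) A5(2)]; assumption)
qed

end
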